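(* For every even integer $n\geq 4$ and every integer $m\geq 2$, the graph $mW_n$ (the disjoint union of $m$ copies of the wheel $W_n$) is $C_3$-supermagic.
   Context: All graphs are finite and simple. For a graph $H$, a graph $G=(V,E)$ has an $H$-covering if every edge of $G$ belongs to a subgraph of $G$ isomorphic to $H$. For such $G$, an $H$-magic labeling is a bijection $\lambda: V\cup E\to\{1,2,\dots,|V|+|E|\}$ for which there is a constant $c$ such that for every subgraph $H'=(V',E')$ of $G$ isomorphic to $H$, $\sum_{v\in V'}\lambda(v)+\sum_{e\in E'}\lambda(e)=c$. It is $H$-supermagic if moreover $\{\lambda(v):v\in V\}=\{1,\dots,|V|\}$; $G$ is $H$-supermagic if it admits such a labeling. $C_k$ is the cycle of length $k$. $mG$ denotes the disjoint union of $m$ copies of $G$. The wheel $W_n=K_1+C_n$ has vertices $c,v_1,\dots,v_n$ and edges $cv_i$ ($1\le i\le n$) and $v_iv_{i+1}$ ($1\le i\le n$, indices modulo $n$). *)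

theory Defs
  imports Main
begin

type_synonym 'a graph = "'a set \<times> 'a set set"

definition simple_graph :: "'a graph \<Rightarrow> bool" where
  "simple_graph G \<longleftrightarrow> finite (fst G) \<and>
     (\<forall>e\<in>snd G. \<exists>u v. u \<in> fst G \<and> v \<in> fst G \<and> u \<noteq> v \<and> e = {u, v})"

definition subgraph :: "'a graph \<Rightarrow> 'a graph \<Rightarrow> bool" where
  "subgraph G' G \<longleftrightarrow> fst G' \<subseteq> fst G \<and> snd G' \<subseteq> snd G \<and> (\<forall>e\<in>snd G'. e \<subseteq> fst G')"

definition graph_iso :: "'b graph \<Rightarrow> 'a graph \<Rightarrow> bool" where
  "graph_iso H G' \<longleftrightarrow> (\<exists>f. bij_betw f (fst H) (fst G') \<and>
      (\<forall>u\<in>fst H. \<forall>v\<in>fst H. {u, v} \<in> snd H \<longleftrightarrow> {f u, f v} \<in> snd G'))"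

definition H_subgraphs :: "'b graph \<Rightarrow> 'a graph \<Rightarrow> 'a graph set" where
  "H_subgraphs H G = {G'. subgraph G' G \<and> graph_iso H G'}"

definition H_covering :: "'b graph \<Rightarrow> 'a graph \<Rightarrow> bool" where
  "H_covering H G \<longleftrightarrow> (\<forall>e\<in>snd G. \<exists>G'\<in>H_subgraphs H G. e \<in> snd G')"

text \<open>A labeling of vertices and edges: Inl v for vertex v, Inr e for edge e.\<close>
definition weight :: "('a + 'a set \<Rightarrow> nat) \<Rightarrow> 'a graph \<Rightarrow> nat" where
  "weight lam G' = (\<Sum>v\<in>fst G'. lam (Inl v)) + (\<Sum>e\<in>snd G'. lam (Inr e))"

definition H_magic_labeling :: "'b graph \<Rightarrow> 'a graph \<Rightarrow> ('a + 'a set \<Rightarrow> nat) \<Rightarrow> bool" where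
  "H_magic_labeling H G lam \<longleftrightarrow>
     bij_betw lam (Inl ` fst G \<union> Inr ` snd G) {1 .. card (fst G) + card (snd G)} \<and>
     (\<exists>c. \<forall>G'\<in>H_subgraphs H G. weight lam G' = c)"

definition H_supermagic_labeling :: "'b graph \<Rightarrow> 'a graph \<Rightarrow> ('a + 'a set \<Rightarrow> nat) \<Rightarrow> bool" where
  "H_supermagic_labeling H G lam \<longleftrightarrow>
     H_magic_labeling H G lam \<and> lam ` Inl ` fst G = {1 .. card (fst G)}"

definition H_supermagic :: "'b graph \<Rightarrow> 'a graph \<Rightarrow> bool" where
  "H_supermagic H G \<longleftrightarrow> H_covering H G \<and> (\<exists>lam. H_supermagic_labeling H G lam)"

definition cycle_graph :: "nat \<Rightarrow> nat graph" where
  "cycle_graph k = ({..<k}, {{i, (i + 1) mod k} | i. i < k})"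

text \<open>m W_n: copy j < m has centre (j,0) and rim vertices (j,1),...,(j,n);
  edges (j,0)(j,i) and (j,i)(j,i mod n + 1) for 1 <= i <= n.\<close>
definition mWheel :: "nat \<Rightarrow> nat \<Rightarrow> (nat \<times> nat) graph" where
  "mWheel m n = ({(j, i). j < m \<and> i \<le> n},
     {{(j, 0), (j, i)} | j i. j < m \<and> 1 \<le> i \<and> i \<le> n} \<union>
     {{(j, i), (j, i mod n + 1)} | j i. j < m \<and> 1 \<le> i \<and> i \<le> n})"

end

theory Submission
  imports Defs
begin

text \<open>
  By the structure of the wheel, for \<open>n \<ge> 4\<close> the triangles of \<open>m W\<^sub>n\<close> are exactly the
  triangles hub, \<open>i\<close>, \<open>i + 1\<close> in one copy \<open>j\<close>. Fix a labeling \<open>g\<close> of a single wheel by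
  \<open>0, \<dots>, n\<close> and label vertex \<open>k\<close> of copy \<open>j\<close> by \<open>m g(k) + \<epsilon> + 1\<close>, where the offset
  \<open>\<epsilon>\<close> is \<open>j\<close> at the hub and alternates between \<open>j\<close> and \<open>m - 1 - j\<close> around the even
  rim. With the edge code \<open>c(j, i) = m (g(i) + g(i + 1) - 1) + j\<close>, the spoke to \<open>(j, i)\<close> is
  labeled \<open>top - c(j, i)\<close> and the rim edge from \<open>(j, i)\<close> to \<open>(j, i + 1)\<close> is labeled
  \<open>bottom + c(j, i + 1)\<close>. In a triangle the rim edge cancels the second spoke, and the first
  spoke cancels everything in the vertex weight that depends on \<open>i\<close> and \<open>j\<close>. These labels
  are all distinct provided the rim sums \<open>g(i) + g(i + 1)\<close> are distinct and no two of them
  add up to \<open>2 n + 1\<close>; explicit such \<open>g\<close> are given for \<open>n \<equiv> 0\<close> and \<open>n \<equiv> 2 (mod 4)\<close>.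
\<close>

lemma bij_betw_if_inj_on_card_eq:
  assumes "finite B" "inj_on f A" "f ` A \<subseteq> B" "card A = card B"
  shows "bij_betw f A B"
  using assms by (metis bij_betw_imageI card_image card_subset_eq)

lemma mult_add_eq_mult_add_iff:
  fixes m a b j k :: nat
  assumes "j < m" "k < m"
  shows "m * a + j = m * b + k \<longleftrightarrow> a = b \<and> j = k"
proof
  assume eq: "m * a + j = m * b + k"
  have "a = (m * a + j) div m" "b = (m * b + k) div m" using assms by simp_all
  moreover have "j = (m * a + j) mod m" "k = (m * b + k) mod m" using assms by simp_all
  ultimately show "a = b \<and> j = k" using eq by simp
qed simp

lemma cycle_graph_3: "cycle_graph 3 = ({0, 1, 2}, {{0, 1}, {1, 2}, {0, 2}})"
proof -
  have below_3: "{..<3::nat} = {0, 1, 2}" by auto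
  have "{{i, (i + 1) mod 3} | i. i < (3::nat)} = (\<lambda>i. {i, (i + 1) mod 3}) ` {..<3}"
    by blast
  also have "\<dots> = {{0, 1}, {1, 2}, {0, 2}}"
    unfolding below_3 by (simp add: insert_commute numeral_2_eq_2)
  finally have "{{i, (i + 1) mod 3} | i. i < (3::nat)} = {{0, 1}, {1, 2}, {0, 2}}" .
  then show ?thesis unfolding cycle_graph_def below_3 by simp
qed

definition triangle :: "'a \<Rightarrow> 'a \<Rightarrow> 'a \<Rightarrow> 'a graph" where
  "triangle x y z = ({x, y, z}, {{x, y}, {y, z}, {x, z}})"

lemma triangle_swap12: "triangle x y z = triangle y x z"
  by (simp add: triangle_def insert_commute)

lemma triangle_swap23: "triangle x y z = triangle x z y"
  by (simp add: triangle_def insert_commute)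

lemma simple_graph_edgeE:
  assumes "simple_graph G" "e \<in> snd G"
  obtains u v where "u \<in> fst G" "v \<in> fst G" "u \<noteq> v" "e = {u, v}"
  using assms unfolding simple_graph_def by blast

lemma simple_graph_edge_vertex:
  assumes "simple_graph G" "{a, b} \<in> snd G"
  shows "a \<in> fst G"
  using assms by (elim simple_graph_edgeE) (auto simp: doubleton_eq_iff)

lemma C3_subgraph_is_triangle:
  assumes "simple_graph G" and "G' \<in> H_subgraphs (cycle_graph 3) G"
  obtains x y z where "x \<noteq> y" "y \<noteq> z" "x \<noteq> z"
    "{x, y} \<in> snd G" "{y, z} \<in> snd G" "{x, z} \<in> snd G" "G' = triangle x y z"
proof -
  from assms(2) have sub: "subgraph G' G" and "graph_iso (cycle_graph 3) G'"
    by (simp_all add: H_subgraphs_def)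
  then obtain f :: "nat \<Rightarrow> 'a" where bij: "bij_betw f {0, 1, 2} (fst G')"
    and adj: "\<forall>u\<in>{0, 1, 2}. \<forall>v\<in>{0, 1, 2}.
      {u, v} \<in> {{0, 1}, {1, 2}, {0, 2}} \<longleftrightarrow> {f u, f v} \<in> snd G'"
    unfolding graph_iso_def cycle_graph_3 fst_conv snd_conv by blast
  define x y z where "x = f 0" and "y = f 1" and "z = f 2"
  have V': "fst G' = {x, y, z}"
    using bij_betw_imp_surj_on[OF bij] by (simp add: x_def y_def z_def)
  have distinct: "x \<noteq> y" "y \<noteq> z" "x \<noteq> z"
    using bij_betw_imp_inj_on[OF bij] unfolding x_def y_def z_def inj_on_def by fastforce+
  have E'_sup: "{x, y} \<in> snd G'" "{y, z} \<in> snd G'" "{x, z} \<in> snd G'"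
    using adj unfolding x_def y_def z_def by auto
  have E'_sub: "snd G' \<subseteq> snd G" and E'_V': "\<forall>e\<in>snd G'. e \<subseteq> fst G'"
    using sub by (auto simp: subgraph_def)
  have "snd G' \<subseteq> {{x, y}, {y, z}, {x, z}}"
  proof
    fix e assume e: "e \<in> snd G'"
    then obtain u v where "e = {u, v}" "u \<noteq> v"
      using E'_sub assms(1) by (blast elim: simple_graph_edgeE)
    with e E'_V' V' show "e \<in> {{x, y}, {y, z}, {x, z}}" by auto
  qed
  with E'_sup have "snd G' = {{x, y}, {y, z}, {x, z}}" by blast
  with V' have "G' = triangle x y z" by (simp add: triangle_def prod_eq_iff)
  with distinct E'_sup E'_sub show ?thesis using that by blast
qed

lemma triangle_in_C3_subgraphs:
  assumes "simple_graph G" and "x \<noteq> y" "y \<noteq> z" "x \<noteq> z"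
    and "{x, y} \<in> snd G" "{y, z} \<in> snd G" "{x, z} \<in> snd G"
  shows "triangle x y z \<in> H_subgraphs (cycle_graph 3) G"
proof -
  have "x \<in> fst G" "y \<in> fst G" "z \<in> fst G"
    using assms(1,5,6) simple_graph_edge_vertex by (metis insert_commute)+
  then have sub: "subgraph (triangle x y z) G"
    using assms(5-7) by (simp add: subgraph_def triangle_def)
  define f :: "nat \<Rightarrow> 'a" where "f u = (if u = 0 then x else if u = 1 then y else z)" for u
  have bij: "bij_betw f {0, 1, 2} {x, y, z}"
    using assms(2-4) by (auto simp: bij_betw_def inj_on_def f_def)
  have adj: "\<forall>u\<in>{0, 1, 2}. \<forall>v\<in>{0, 1, 2}.
      {u, v} \<in> {{0, 1}, {1, 2}, {0, 2 :: nat}} \<longleftrightarrow> {f u, f v} \<in> {{x, y}, {y, z}, {x, z}}"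
    using assms(2-4) by (auto simp: f_def doubleton_eq_iff)
  have "graph_iso (cycle_graph 3) (triangle x y z)"
    unfolding graph_iso_def cycle_graph_3 triangle_def fst_conv snd_conv
    by (intro exI[of _ f] conjI bij adj)
  with sub show ?thesis by (simp add: H_subgraphs_def)
qed

lemma weight_triangle:
  assumes "x \<noteq> y" "y \<noteq> z" "x \<noteq> z"
  shows "weight lam (triangle x y z) = lam (Inl x) + lam (Inl y) + lam (Inl z) +
    lam (Inr {x, y}) + lam (Inr {y, z}) + lam (Inr {x, z})"
proof -
  have "{x, y} \<noteq> {y, z}" "{x, y} \<noteq> {x, z}" "{y, z} \<noteq> {x, z}"
    using assms by (simp_all add: doubleton_eq_iff)
  with assms show ?thesis by (simp add: weight_def triangle_def add.assoc)
qed

definition rim_next :: "nat \<Rightarrow> nat \<Rightarrow> nat" where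
  "rim_next n i = i mod n + 1"

lemma rim_next_eq: "1 \<le> i \<Longrightarrow> i \<le> n \<Longrightarrow> rim_next n i = (if i = n then 1 else Suc i)"
  by (simp add: rim_next_def)

lemma rim_next_bounds: "1 \<le> i \<Longrightarrow> i \<le> n \<Longrightarrow> 1 \<le> rim_next n i \<and> rim_next n i \<le> n"
  by (simp add: rim_next_eq)

lemma rim_next_neq: "2 \<le> n \<Longrightarrow> 1 \<le> i \<Longrightarrow> i \<le> n \<Longrightarrow> rim_next n i \<noteq> i"
  by (simp add: rim_next_eq)

lemma rim_next_rim_next_neq:
  "3 \<le> n \<Longrightarrow> 1 \<le> i \<Longrightarrow> i \<le> n \<Longrightarrow> rim_next n (rim_next n i) \<noteq> i"
  by (auto simp: rim_next_eq)

lemma bij_betw_rim_next: "bij_betw (rim_next n) {1..n} {1..n}"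
proof (rule bij_betw_if_inj_on_card_eq)
  show "inj_on (rim_next n) {1..n}"
    by (auto simp: inj_on_def rim_next_eq split: if_splits)
qed (auto simp: rim_next_eq)

definition rim_adjacent :: "nat \<Rightarrow> nat \<Rightarrow> nat \<Rightarrow> bool" where
  "rim_adjacent n p q \<longleftrightarrow> q = rim_next n p \<or> p = rim_next n q"

lemma rim_adjacent_iff:
  assumes "1 \<le> p" "p \<le> n" "1 \<le> q" "q \<le> n"
  shows "rim_adjacent n p q \<longleftrightarrow> q = Suc p \<or> p = Suc q \<or> (p = n \<and> q = 1) \<or> (q = n \<and> p = 1)"
  using assms by (auto simp: rim_adjacent_def rim_next_eq)

text \<open>The only place where \<open>n \<ge> 4\<close> is essential: for \<open>n = 3\<close> the rim is itself a triangle.\<close>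
lemma rim_triangle_free:
  assumes "4 \<le> n" "1 \<le> p" "p \<le> n" "1 \<le> q" "q \<le> n" "1 \<le> r" "r \<le> n"
    and "p \<noteq> q" "q \<noteq> r" "p \<noteq> r"
    and "rim_adjacent n p q" "rim_adjacent n q r" "rim_adjacent n p r"
  shows False
  using assms(1-10) assms(11-13)[unfolded rim_adjacent_iff[OF assms(2-5)]
      rim_adjacent_iff[OF assms(4-7)] rim_adjacent_iff[OF assms(2,3,6,7)]]
  by (elim disjE conjE; linarith)

abbreviation rim_vertices :: "nat \<Rightarrow> nat \<Rightarrow> (nat \<times> nat) set" where
  "rim_vertices m n \<equiv> {..<m} \<times> {1..n}"

fun spoke :: "nat \<times> nat \<Rightarrow> (nat \<times> nat) set" where
  "spoke (j, i) = {(j, 0), (j, i)}"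

fun rim_edge :: "nat \<Rightarrow> nat \<times> nat \<Rightarrow> (nat \<times> nat) set" where
  "rim_edge n (j, i) = {(j, i), (j, rim_next n i)}"

lemma mWheel_vertices: "fst (mWheel m n) = {..<m} \<times> {..n}"
  by (auto simp: mWheel_def)

lemma mWheel_edges:
  "snd (mWheel m n) = spoke ` rim_vertices m n \<union> rim_edge n ` rim_vertices m n"
proof -
  have "{{(j, 0), (j, i)} | j i. j < m \<and> 1 \<le> i \<and> i \<le> n} = spoke ` rim_vertices m n"
  proof (intro set_eqI iffI)
    fix e assume "e \<in> {{(j, 0), (j, i)} | j i. j < m \<and> 1 \<le> i \<and> i \<le> n}"
    then obtain j i where "e = spoke (j, i)" "(j, i) \<in> rim_vertices m n" by auto
    then show "e \<in> spoke ` rim_vertices m n" by blast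
  next
    fix e assume "e \<in> spoke ` rim_vertices m n"
    then obtain j i where "e = {(j, 0), (j, i)}" "j < m" "1 \<le> i" "i \<le> n" by auto
    then show "e \<in> {{(j, 0), (j, i)} | j i. j < m \<and> 1 \<le> i \<and> i \<le> n}" by blast
  qed
  moreover have "{{(j, i), (j, i mod n + 1)} | j i. j < m \<and> 1 \<le> i \<and> i \<le> n} =
      rim_edge n ` rim_vertices m n"
  proof (intro set_eqI iffI)
    fix e assume "e \<in> {{(j, i), (j, i mod n + 1)} | j i. j < m \<and> 1 \<le> i \<and> i \<le> n}"
    then obtain j i where "e = rim_edge n (j, i)" "(j, i) \<in> rim_vertices m n"
      by (auto simp: rim_next_def)
    then show "e \<in> rim_edge n ` rim_vertices m n" by blast
  next
    fix e assume "e \<in> rim_edge n ` rim_vertices m n"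
    then obtain j i where "e = {(j, i), (j, i mod n + 1)}" "j < m" "1 \<le> i" "i \<le> n"
      by (auto simp: rim_next_def)
    then show "e \<in> {{(j, i), (j, i mod n + 1)} | j i. j < m \<and> 1 \<le> i \<and> i \<le> n}" by blast
  qed
  ultimately show ?thesis by (simp add: mWheel_def)
qed

lemma spoke_in_mWheel: "j < m \<Longrightarrow> 1 \<le> i \<Longrightarrow> i \<le> n \<Longrightarrow> spoke (j, i) \<in> snd (mWheel m n)"
  unfolding mWheel_edges by (intro UnI1 imageI) simp

lemma rim_edge_in_mWheel:
  "j < m \<Longrightarrow> 1 \<le> i \<Longrightarrow> i \<le> n \<Longrightarrow> rim_edge n (j, i) \<in> snd (mWheel m n)"
  unfolding mWheel_edges by (intro UnI2 imageI) simp

lemma inj_on_spoke: "inj_on spoke (rim_vertices m n)"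
  by (auto simp: inj_on_def doubleton_eq_iff)

lemma inj_on_rim_edge:
  assumes "3 \<le> n"
  shows "inj_on (rim_edge n) (rim_vertices m n)"
proof (rule inj_onI)
  fix z z' assume "z \<in> rim_vertices m n" "z' \<in> rim_vertices m n" "rim_edge n z = rim_edge n z'"
  moreover obtain j i j' i' where "z = (j, i)" "z' = (j', i')" by fastforce
  ultimately have "1 \<le> i'" "i' \<le> n" and
    "z = z' \<or> (i = rim_next n i' \<and> rim_next n i = i')"
    by (auto simp: doubleton_eq_iff)
  then show "z = z'" using rim_next_rim_next_neq[OF assms] by blast
qed

lemma rim_edge_not_spoke: "z \<in> rim_vertices m n \<Longrightarrow> rim_edge n z \<notin> spoke ` A"
  by (cases z) (auto simp: doubleton_eq_iff rim_next_def)

lemma rim_next_in_rim: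
  "(j, i) \<in> rim_vertices m n \<Longrightarrow> (j, rim_next n i) \<in> rim_vertices m n"
  using rim_next_bounds[of i n] by auto

lemma card_mWheel_vertices: "card (fst (mWheel m n)) = m * (n + 1)"
  by (simp add: mWheel_vertices)

lemma card_mWheel_edges:
  assumes "3 \<le> n"
  shows "card (snd (mWheel m n)) = 2 * m * n"
proof -
  let ?I = "rim_vertices m n"
  have "card (spoke ` ?I \<union> rim_edge n ` ?I) = card (spoke ` ?I) + card (rim_edge n ` ?I)"
  proof (rule card_Un_disjoint)
    show "spoke ` ?I \<inter> rim_edge n ` ?I = {}"
      using rim_edge_not_spoke[where A = ?I] by blast
  qed simp_all
  also have "\<dots> = 2 * m * n"
    using card_image[OF inj_on_spoke] card_image[OF inj_on_rim_edge[OF assms]] by simp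
  finally show ?thesis by (simp add: mWheel_edges)
qed

lemma simple_graph_mWheel:
  assumes "2 \<le> n"
  shows "simple_graph (mWheel m n)"
  unfolding simple_graph_def
proof (intro conjI ballI)
  show "finite (fst (mWheel m n))" by (simp add: mWheel_vertices)
next
  fix e assume "e \<in> snd (mWheel m n)"
  then obtain j i where ji: "j < m" "1 \<le> i" "i \<le> n"
    and e_cases: "e = {(j, 0), (j, i)} \<or> e = {(j, i), (j, rim_next n i)}"
    unfolding mWheel_edges by auto
  from e_cases show "\<exists>u v. u \<in> fst (mWheel m n) \<and> v \<in> fst (mWheel m n) \<and> u \<noteq> v \<and> e = {u, v}"
  proof
    assume "e = {(j, 0), (j, i)}"
    with ji show ?thesis
      by (intro exI[of _ "(j, 0)"] exI[of _ "(j, i)"]) (simp add: mWheel_vertices)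
  next
    assume "e = {(j, i), (j, rim_next n i)}"
    with ji show ?thesis
      using rim_next_bounds[OF ji(2,3)] rim_next_neq[OF assms ji(2,3)]
      by (intro exI[of _ "(j, i)"] exI[of _ "(j, rim_next n i)"]) (simp add: mWheel_vertices)
  qed
qed

lemma mWheel_edgeD:
  assumes "{(j, p), (j', q)} \<in> snd (mWheel m n)"
  shows "j' = j \<and> j < m \<and> ((p = 0 \<and> 1 \<le> q \<and> q \<le> n) \<or> (q = 0 \<and> 1 \<le> p \<and> p \<le> n) \<or>
    (1 \<le> p \<and> p \<le> n \<and> 1 \<le> q \<and> q \<le> n \<and> rim_adjacent n p q))"
proof -
  from assms obtain k i where ki: "k < m" "1 \<le> i" "i \<le> n"
    and "{(j, p), (j', q)} = {(k, 0), (k, i)} \<or> {(j, p), (j', q)} = {(k, i), (k, rim_next n i)}"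
    unfolding mWheel_edges by auto
  then show ?thesis
    using rim_next_bounds[OF ki(2,3)] unfolding rim_adjacent_def
    by (auto simp: doubleton_eq_iff)
qed

fun wheel_triangle :: "nat \<Rightarrow> nat \<times> nat \<Rightarrow> (nat \<times> nat) graph" where
  "wheel_triangle n (j, i) = triangle (j, 0) (j, i) (j, rim_next n i)"

lemma hub_triangle:
  assumes "j < m" "1 \<le> q" "q \<le> n" "1 \<le> r" "r \<le> n" "rim_adjacent n q r"
  shows "triangle (j, 0) (j, q) (j, r) \<in> wheel_triangle n ` rim_vertices m n"
  using assms(6) unfolding rim_adjacent_def
proof
  assume "r = rim_next n q"
  then have "triangle (j, 0) (j, q) (j, r) = wheel_triangle n (j, q)" by simp
  with assms(1-3) show ?thesis by (intro image_eqI) auto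
next
  assume "q = rim_next n r"
  then have "triangle (j, 0) (j, q) (j, r) = wheel_triangle n (j, r)"
    by (simp add: triangle_swap23)
  with assms(1,4,5) show ?thesis by (intro image_eqI) auto
qed

lemma mWheel_triangle:
  assumes "4 \<le> n" "x \<noteq> y" "y \<noteq> z" "x \<noteq> z"
    and xy: "{x, y} \<in> snd (mWheel m n)" and yz: "{y, z} \<in> snd (mWheel m n)"
    and xz: "{x, z} \<in> snd (mWheel m n)"
  shows "triangle x y z \<in> wheel_triangle n ` rim_vertices m n"
proof -
  obtain j p j' q j'' r where x: "x = (j, p)" and y: "y = (j', q)" and z: "z = (j'', r)"
    by (metis prod.exhaust)
  note xy' = mWheel_edgeD[OF xy[unfolded x y]] and yz' = mWheel_edgeD[OF yz[unfolded y z]]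
    and xz' = mWheel_edgeD[OF xz[unfolded x z]]
  then have copy: "j' = j" "j'' = j" "j < m" by auto
  have pqr: "p \<noteq> q" "q \<noteq> r" "p \<noteq> r" using assms(2-4) x y z copy by auto
  consider "p = 0" | "q = 0" | "r = 0" | "p \<noteq> 0" "q \<noteq> 0" "r \<noteq> 0" by blast
  then show ?thesis
  proof cases
    case 1
    with yz' pqr have "triangle (j, 0) (j, q) (j, r) \<in> wheel_triangle n ` rim_vertices m n"
      by (intro hub_triangle copy(3)) auto
    with 1 show ?thesis by (simp add: x y z copy)
  next
    case 2
    with xz' pqr have "triangle (j, 0) (j, p) (j, r) \<in> wheel_triangle n ` rim_vertices m n"
      by (intro hub_triangle copy(3)) auto
    with 2 show ?thesis by (simp add: x y z copy triangle_swap12)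
  next
    case 3
    with xy' pqr have "triangle (j, 0) (j, p) (j, q) \<in> wheel_triangle n ` rim_vertices m n"
      by (intro hub_triangle copy(3)) auto
    with 3 show ?thesis by (simp add: x y z copy triangle_swap12 triangle_swap23)
  next
    case 4
    with xy' yz' xz' have "1 \<le> p" "p \<le> n" "1 \<le> q" "q \<le> n" "1 \<le> r" "r \<le> n"
      "rim_adjacent n p q" "rim_adjacent n q r" "rim_adjacent n p r"
      by auto
    from rim_triangle_free[OF assms(1) this(1-6) pqr this(7-9)] show ?thesis ..
  qed
qed

lemma mWheel_C3_subgraphs:
  assumes "4 \<le> n"
  shows "H_subgraphs (cycle_graph 3) (mWheel m n) = wheel_triangle n ` rim_vertices m n"
proof
  have simple: "simple_graph (mWheel m n)" using assms by (simp add: simple_graph_mWheel)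
  show "H_subgraphs (cycle_graph 3) (mWheel m n) \<subseteq> wheel_triangle n ` rim_vertices m n"
  proof
    fix G' assume "G' \<in> H_subgraphs (cycle_graph 3) (mWheel m n)"
    then show "G' \<in> wheel_triangle n ` rim_vertices m n"
      by (rule C3_subgraph_is_triangle[OF simple]) (blast intro: mWheel_triangle[OF assms])
  qed
  show "wheel_triangle n ` rim_vertices m n \<subseteq> H_subgraphs (cycle_graph 3) (mWheel m n)"
  proof
    fix G' assume "G' \<in> wheel_triangle n ` rim_vertices m n"
    then obtain j i where ji: "j < m" "1 \<le> i" "i \<le> n" and G': "G' = wheel_triangle n (j, i)"
      by auto
    have next_i: "1 \<le> rim_next n i" "rim_next n i \<le> n" "rim_next n i \<noteq> i"
      using rim_next_bounds[OF ji(2,3)] rim_next_neq[OF _ ji(2,3)] assms by auto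
    have "{(j, 0), (j, i)} \<in> snd (mWheel m n)" "{(j, 0), (j, rim_next n i)} \<in> snd (mWheel m n)"
      "{(j, i), (j, rim_next n i)} \<in> snd (mWheel m n)"
      using spoke_in_mWheel[OF ji(1)] rim_edge_in_mWheel[OF ji] ji(2,3) next_i by simp_all
    then show "G' \<in> H_subgraphs (cycle_graph 3) (mWheel m n)"
      using ji next_i unfolding G' by (auto intro!: triangle_in_C3_subgraphs[OF simple])
  qed
qed

lemma mWheel_C3_covering:
  assumes "4 \<le> n"
  shows "H_covering (cycle_graph 3) (mWheel m n)"
  unfolding H_covering_def mWheel_C3_subgraphs[OF assms]
proof
  fix e assume "e \<in> snd (mWheel m n)"
  then obtain z where z: "z \<in> rim_vertices m n" and "e = spoke z \<or> e = rim_edge n z"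
    unfolding mWheel_edges by auto
  then have "e \<in> snd (wheel_triangle n z)" by (cases z) (auto simp: triangle_def)
  with z show "\<exists>G'\<in>wheel_triangle n ` rim_vertices m n. e \<in> snd G'" by blast
qed

definition rim_sum :: "nat \<Rightarrow> (nat \<Rightarrow> nat) \<Rightarrow> nat \<Rightarrow> nat" where
  "rim_sum n g i = g i + g (rim_next n i)"

text \<open>A base labeling \<open>g\<close> labels the hub \<open>0\<close> and the rim vertices \<open>1, \<dots>, n\<close> of a
  single wheel \<open>W\<^sub>n\<close> by \<open>0, \<dots>, n\<close>; \<open>rim_sum n g i\<close> is the weight of the rim edge
  leaving \<open>i\<close>.\<close>
definition admissible_base_labeling :: "nat \<Rightarrow> (nat \<Rightarrow> nat) \<Rightarrow> bool" where
  "admissible_base_labeling n g \<longleftrightarrow> bij_betw g {..n} {..n} \<and> inj_on (rim_sum n g) {1..n} \<and>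
     (\<forall>i\<in>{1..n}. \<forall>k\<in>{1..n}. rim_sum n g i + rim_sum n g k \<noteq> 2 * n + 1)"

lemma rim_sum_bounds:
  assumes "admissible_base_labeling n g" "2 \<le> n" "1 \<le> i" "i \<le> n"
  shows "1 \<le> rim_sum n g i \<and> rim_sum n g i < 2 * n"
proof -
  have bij: "bij_betw g {..n} {..n}" using assms(1) by (simp add: admissible_base_labeling_def)
  have "rim_next n i \<le> n" "rim_next n i \<noteq> i"
    using rim_next_bounds[OF assms(3,4)] rim_next_neq[OF assms(2-4)] by auto
  with assms(4) have "g i \<noteq> g (rim_next n i)" "g i \<le> n" "g (rim_next n i) \<le> n"
    using inj_onD[OF bij_betw_imp_inj_on[OF bij], of i "rim_next n i"]
      bij_betw_apply[OF bij, of i] bij_betw_apply[OF bij, of "rim_next n i"] by auto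
  then show ?thesis by (simp add: rim_sum_def)
qed

lemma admissible_base_labelingI:
  assumes "g ` {..n} \<subseteq> {..n}" "\<And>i. i \<in> {1..n} \<Longrightarrow> g i \<noteq> g 0" "inj_on g {1..n}"
    and "inj_on (rim_sum n g) {1..n}"
    and "\<And>i k. i \<in> {1..n} \<Longrightarrow> k \<in> {1..n} \<Longrightarrow> rim_sum n g i + rim_sum n g k \<noteq> 2 * n + 1"
  shows "admissible_base_labeling n g"
proof -
  have "g 0 \<notin> g ` {1..n}"
  proof
    assume "g 0 \<in> g ` {1..n}"
    then obtain i where "i \<in> {1..n}" "g 0 = g i" by blast
    with assms(2) show False by metis
  qed
  moreover have "{..n} = insert 0 {1..n}" by auto
  ultimately have "inj_on g {..n}" using assms(3) by simp
  with assms show ?thesis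
    by (simp add: admissible_base_labeling_def bij_betw_if_inj_on_card_eq)
qed

locale mWheel_labeling =
  fixes m n :: nat and g :: "nat \<Rightarrow> nat"
  assumes four_le_n: "4 \<le> n" and even_n: "even n" and admissible: "admissible_base_labeling n g"
begin

lemma bij_g: "bij_betw g {..n} {..n}"
  and inj_on_rim_sum: "inj_on (rim_sum n g) {1..n}"
  and rim_sum_add_neq: "i \<in> {1..n} \<Longrightarrow> k \<in> {1..n} \<Longrightarrow> rim_sum n g i + rim_sum n g k \<noteq> 2 * n + 1"
  using admissible by (auto simp: admissible_base_labeling_def)

definition offset :: "nat \<Rightarrow> nat \<Rightarrow> nat" where
  "offset j k = (if k \<noteq> 0 \<and> even k then m - 1 - j else j)"

lemma offset_less: "j < m \<Longrightarrow> offset j k < m"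
  by (simp add: offset_def)

lemma offset_inj: "j < m \<Longrightarrow> j' < m \<Longrightarrow> offset j k = offset j' k \<Longrightarrow> j = j'"
  by (auto simp: offset_def split: if_splits)

lemma offset_add_offset_rim_next:
  assumes "j < m" "1 \<le> i" "i \<le> n"
  shows "offset j i + offset j (rim_next n i) + 1 = m"
  using assms even_n by (auto simp: offset_def rim_next_eq)

fun vertex_label :: "nat \<times> nat \<Rightarrow> nat" where
  "vertex_label (j, k) = m * g k + offset j k + 1"

lemma bij_vertex_label: "bij_betw vertex_label (fst (mWheel m n)) {1..m * (n + 1)}"
proof (rule bij_betw_if_inj_on_card_eq)
  show "inj_on vertex_label (fst (mWheel m n))"
  proof (rule inj_onI)
    fix v v' assume "v \<in> fst (mWheel m n)" "v' \<in> fst (mWheel m n)"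
      and "vertex_label v = vertex_label v'"
    moreover obtain j k j' k' where v: "v = (j, k)" and v': "v' = (j', k')" by fastforce
    ultimately have jk: "j < m" "k \<le> n" "j' < m" "k' \<le> n"
      and "m * g k + offset j k = m * g k' + offset j' k'"
      by (auto simp: mWheel_vertices)
    then have "g k = g k'" "offset j k = offset j' k'"
      using mult_add_eq_mult_add_iff[OF offset_less offset_less] by blast+
    moreover from this(1) have "k = k'"
      using bij_betw_imp_inj_on[OF bij_g] jk by (simp add: inj_on_eq_iff)
    ultimately show "v = v'" using offset_inj jk v v' by simp
  qed
  show "vertex_label ` fst (mWheel m n) \<subseteq> {1..m * (n + 1)}"
  proof clarify
    fix j k assume "(j, k) \<in> fst (mWheel m n)"
    then have "j < m" "g k \<le> n" using bij_betw_apply[OF bij_g] by (auto simp: mWheel_vertices)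
    then have "m * g k \<le> m * n" "offset j k < m" using offset_less by simp_all
    then have "m * g k + offset j k + 1 \<le> m * n + m" by linarith
    then show "vertex_label (j, k) \<in> {1..m * (n + 1)}" by simp
  qed
qed (simp_all add: card_mWheel_vertices)

fun edge_code :: "nat \<times> nat \<Rightarrow> nat" where
  "edge_code (j, i) = m * (rim_sum n g i - 1) + j"

lemma edge_code_less:
  assumes "(j, i) \<in> rim_vertices m n"
  shows "edge_code (j, i) < 2 * m * n"
proof -
  have "1 \<le> rim_sum n g i \<and> rim_sum n g i < 2 * n"
    using rim_sum_bounds[OF admissible, of i] four_le_n assms by auto
  then have "rim_sum n g i - 1 + 1 \<le> 2 * n" by arith
  then have "m * (rim_sum n g i - 1 + 1) \<le> m * (2 * n)" by (rule mult_le_mono2)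
  then have "m * (rim_sum n g i - 1) + m \<le> m * (2 * n)" by (simp add: distrib_left)
  then show ?thesis using assms by simp
qed

lemma inj_on_edge_code: "inj_on edge_code (rim_vertices m n)"
proof (rule inj_onI)
  fix z z' assume "z \<in> rim_vertices m n" "z' \<in> rim_vertices m n" "edge_code z = edge_code z'"
  moreover obtain j i j' i' where z: "z = (j, i)" and z': "z' = (j', i')" by fastforce
  ultimately have ji: "j < m" "j' < m" "i \<in> {1..n}" "i' \<in> {1..n}"
    and "rim_sum n g i - 1 = rim_sum n g i' - 1" "j = j'"
    using mult_add_eq_mult_add_iff by auto
  moreover have "1 \<le> rim_sum n g i" "1 \<le> rim_sum n g i'"
    using rim_sum_bounds[OF admissible, of i] rim_sum_bounds[OF admissible, of i'] four_le_n ji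
    by auto
  ultimately have "rim_sum n g i = rim_sum n g i'" by arith
  with inj_onD[OF inj_on_rim_sum] ji have "i = i'" by blast
  with z z' \<open>j = j'\<close> show "z = z'" by simp
qed

text \<open>Spoke labels count down from the top of the edge range and rim labels count up from its
  bottom, both by edge codes; this lemma keeps the two families apart.\<close>
lemma edge_code_add_edge_code_neq:
  assumes "(j, i) \<in> rim_vertices m n" "(j', i') \<in> rim_vertices m n"
  shows "edge_code (j, i) + edge_code (j', i') + 1 \<noteq> 2 * m * n"
proof
  assume eq: "edge_code (j, i) + edge_code (j', i') + 1 = 2 * m * n"
  define a where "a = (rim_sum n g i - 1) + (rim_sum n g i' - 1)"
  have sum: "m * a + (j + j' + 1) = m * (2 * n)"
    using eq by (simp add: a_def algebra_simps)
  have "j + j' + 1 < m * 2" using assms by simp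
  moreover have "m * (a + 2) = m * a + m * 2" by (simp add: distrib_left)
  ultimately have "m * a < m * (2 * n)" "m * (2 * n) < m * (a + 2)"
    using sum by linarith+
  then have "a < 2 * n" "2 * n < a + 2" unfolding mult_less_cancel1 by simp_all
  then have "a + 1 = 2 * n" by linarith
  moreover have "1 \<le> rim_sum n g i" "1 \<le> rim_sum n g i'"
    using rim_sum_bounds[OF admissible, of i] rim_sum_bounds[OF admissible, of i'] four_le_n assms
    by auto
  ultimately have "rim_sum n g i + rim_sum n g i' = 2 * n + 1" by (simp add: a_def)
  with rim_sum_add_neq assms show False by auto
qed

fun spoke_label :: "nat \<times> nat \<Rightarrow> nat" where
  "spoke_label (j, i) = m * (n + 1) + 2 * m * n - edge_code (j, i)"

fun rim_label :: "nat \<times> nat \<Rightarrow> nat" where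
  "rim_label (j, i) = m * (n + 1) + 1 + edge_code (j, rim_next n i)"

definition edge_label :: "(nat \<times> nat) set \<Rightarrow> nat" where
  "edge_label e = (if e \<in> spoke ` rim_vertices m n
     then spoke_label (the_inv_into (rim_vertices m n) spoke e)
     else rim_label (the_inv_into (rim_vertices m n) (rim_edge n) e))"

lemma edge_label_spoke:
  assumes "z \<in> rim_vertices m n"
  shows "edge_label (spoke z) = spoke_label z"
proof -
  have "spoke z \<in> spoke ` rim_vertices m n" using assms by (rule imageI)
  then show ?thesis
    unfolding edge_label_def using the_inv_into_f_f[OF inj_on_spoke assms] by (simp only: if_True)
qed

lemma edge_label_rim_edge:
  assumes "z \<in> rim_vertices m n"
  shows "edge_label (rim_edge n z) = rim_label z"
proof -
  have "rim_edge n z \<notin> spoke ` rim_vertices m n"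
    using assms by (rule rim_edge_not_spoke)
  moreover have "inj_on (rim_edge n) (rim_vertices m n)"
    using four_le_n by (intro inj_on_rim_edge) simp
  then have "the_inv_into (rim_vertices m n) (rim_edge n) (rim_edge n z) = z"
    using assms by (rule the_inv_into_f_f)
  ultimately show ?thesis
    unfolding edge_label_def by (simp only: if_False)
qed

lemma inj_on_spoke_label: "inj_on spoke_label (rim_vertices m n)"
proof (rule inj_onI)
  fix z z' assume z: "z \<in> rim_vertices m n" and z': "z' \<in> rim_vertices m n"
    and eq: "spoke_label z = spoke_label z'"
  obtain j i j' i' where zz: "z = (j, i)" "z' = (j', i')" by fastforce
  have "edge_code (j, i) < 2 * m * n" "edge_code (j', i') < 2 * m * n"
    using edge_code_less z z' unfolding zz by blast+
  with eq have "edge_code z = edge_code z'" unfolding zz by simp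
  with z z' show "z = z'" by (intro inj_onD[OF inj_on_edge_code])
qed

lemma inj_on_rim_label: "inj_on rim_label (rim_vertices m n)"
proof (rule inj_onI)
  fix z z' assume z: "z \<in> rim_vertices m n" and z': "z' \<in> rim_vertices m n"
    and eq: "rim_label z = rim_label z'"
  obtain j i j' i' where zz: "z = (j, i)" "z' = (j', i')" by fastforce
  from eq have "edge_code (j, rim_next n i) = edge_code (j', rim_next n i')" by (simp add: zz)
  with z z' have "(j, rim_next n i) = (j', rim_next n i')"
    unfolding zz by (intro inj_onD[OF inj_on_edge_code] rim_next_in_rim)
  moreover have "inj_on (rim_next n) {1..n}" using bij_betw_rim_next by (rule bij_betw_imp_inj_on)
  ultimately have "j = j'" "i = i'" using z z' unfolding zz by (auto simp: inj_on_eq_iff)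
  then show "z = z'" by (simp add: zz)
qed

lemma spoke_label_neq_rim_label:
  assumes "z \<in> rim_vertices m n" "z' \<in> rim_vertices m n"
  shows "spoke_label z \<noteq> rim_label z'"
proof
  assume eq: "spoke_label z = rim_label z'"
  obtain j i j' i' where zz: "z = (j, i)" "z' = (j', i')" by fastforce
  have z'_next: "(j', rim_next n i') \<in> rim_vertices m n"
    using assms(2) unfolding zz by (rule rim_next_in_rim)
  have "edge_code (j, i) < 2 * m * n"
    using assms(1) unfolding zz by (rule edge_code_less)
  with eq have "edge_code (j, i) + edge_code (j', rim_next n i') + 1 = 2 * m * n"
    unfolding zz by simp
  with edge_code_add_edge_code_neq[OF assms(1)[unfolded zz] z'_next] show False ..
qed

lemma edge_label_image:
  "edge_label ` snd (mWheel m n) =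
    spoke_label ` rim_vertices m n \<union> rim_label ` rim_vertices m n"
proof -
  have "edge_label ` spoke ` rim_vertices m n = spoke_label ` rim_vertices m n"
    unfolding image_image by (rule image_cong[OF refl edge_label_spoke])
  moreover have "edge_label ` rim_edge n ` rim_vertices m n = rim_label ` rim_vertices m n"
    unfolding image_image by (rule image_cong[OF refl edge_label_rim_edge])
  ultimately show ?thesis by (simp only: mWheel_edges image_Un)
qed

lemma bij_edge_label:
  "bij_betw edge_label (snd (mWheel m n)) {m * (n + 1) + 1 .. m * (n + 1) + 2 * m * n}"
proof -
  let ?I = "rim_vertices m n" and ?J = "{m * (n + 1) + 1 .. m * (n + 1) + 2 * m * n}"
  have "card (spoke_label ` ?I \<union> rim_label ` ?I) = card (spoke_label ` ?I) + card (rim_label ` ?I)"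
    using spoke_label_neq_rim_label by (intro card_Un_disjoint) auto
  also have "\<dots> = 2 * m * n"
    using card_image[OF inj_on_spoke_label] card_image[OF inj_on_rim_label] by simp
  finally have card_image_E: "card (edge_label ` snd (mWheel m n)) = 2 * m * n"
    by (simp only: edge_label_image)
  have "spoke_label z \<in> ?J \<and> rim_label z \<in> ?J" if z: "z \<in> ?I" for z
  proof -
    obtain j i where zz: "z = (j, i)" by fastforce
    have "edge_code (j, i) < 2 * m * n" "edge_code (j, rim_next n i) < 2 * m * n"
      using z rim_next_in_rim edge_code_less unfolding zz by blast+
    then show ?thesis unfolding zz by simp
  qed
  then have "edge_label ` snd (mWheel m n) \<subseteq> ?J"
    unfolding edge_label_image Un_subset_iff image_subset_iff by blast
  with card_image_E have "edge_label ` snd (mWheel m n) = ?J"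
    by (intro card_subset_eq) simp_all
  moreover have "inj_on edge_label (snd (mWheel m n))"
    using card_image_E card_mWheel_edges four_le_n
    by (intro eq_card_imp_inj_on) (simp_all add: mWheel_edges)
  ultimately show ?thesis by (rule bij_betw_imageI[rotated])
qed

definition labeling :: "(nat \<times> nat) + (nat \<times> nat) set \<Rightarrow> nat" where
  "labeling = case_sum vertex_label edge_label"

lemma bij_labeling:
  "bij_betw labeling (Inl ` fst (mWheel m n) \<union> Inr ` snd (mWheel m n))
     {1 .. card (fst (mWheel m n)) + card (snd (mWheel m n))}"
proof -
  have "bij_betw labeling (Inl ` fst (mWheel m n)) {1 .. m * (n + 1)}"
    using bij_vertex_label by (simp add: bij_betw_comp_iff[OF inj_on_imp_bij_betw[OF inj_Inl]]
        labeling_def comp_def)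
  moreover have "bij_betw labeling (Inr ` snd (mWheel m n))
      {m * (n + 1) + 1 .. m * (n + 1) + 2 * m * n}"
    using bij_edge_label by (simp add: bij_betw_comp_iff[OF inj_on_imp_bij_betw[OF inj_Inr]]
        labeling_def comp_def)
  ultimately have "bij_betw labeling (Inl ` fst (mWheel m n) \<union> Inr ` snd (mWheel m n))
      ({1 .. m * (n + 1)} \<union> {m * (n + 1) + 1 .. m * (n + 1) + 2 * m * n})"
    by (rule bij_betw_combine) auto
  moreover have "{1 .. m * (n + 1)} \<union> {m * (n + 1) + 1 .. m * (n + 1) + 2 * m * n} =
      {1 .. card (fst (mWheel m n)) + card (snd (mWheel m n))}"
    using card_mWheel_vertices card_mWheel_edges four_le_n by auto
  ultimately show ?thesis by simp
qed

lemma weight_wheel_triangle: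
  assumes "(j, i) \<in> rim_vertices m n"
  shows "weight labeling (wheel_triangle n (j, i)) =
    m * g 0 + 2 * m + 3 + 3 * (m * (n + 1)) + 4 * m * n"
proof -
  let ?i' = "rim_next n i"
  have next_i: "(j, ?i') \<in> rim_vertices m n" "?i' \<noteq> i"
    using rim_next_in_rim[OF assms] rim_next_neq[of n i] assms four_le_n by auto
  have spoke_i: "edge_label {(j, 0), (j, i)} + edge_code (j, i) = m * (n + 1) + 2 * m * n"
    using edge_label_spoke[OF assms] edge_code_less[OF assms] by simp
  have spoke_i': "edge_label {(j, 0), (j, ?i')} + edge_code (j, ?i') = m * (n + 1) + 2 * m * n"
    using edge_label_spoke[OF next_i(1)] edge_code_less[OF next_i(1)] by simp
  have rim_i: "edge_label {(j, i), (j, ?i')} = m * (n + 1) + 1 + edge_code (j, ?i')"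
    using edge_label_rim_edge[OF assms] by simp
  have "1 \<le> rim_sum n g i"
    using rim_sum_bounds[OF admissible, of i] four_le_n assms by auto
  then obtain s where "rim_sum n g i = Suc s" by (cases "rim_sum n g i") auto
  then have "edge_code (j, i) + m = m * rim_sum n g i + j" by simp
  then have code_i: "edge_code (j, i) + m = m * g i + m * g ?i' + j"
    by (simp add: rim_sum_def distrib_left)
  have offset_i: "offset j i + offset j ?i' + 1 = m"
    using offset_add_offset_rim_next assms by auto
  have "weight labeling (wheel_triangle n (j, i)) =
      vertex_label (j, 0) + vertex_label (j, i) + vertex_label (j, ?i') +
      edge_label {(j, 0), (j, i)} + edge_label {(j, i), (j, ?i')} + edge_label {(j, 0), (j, ?i')}"
    using assms next_i by (simp add: weight_triangle labeling_def)
  also have "\<dots> = m * g 0 + 2 * m + 3 + 3 * (m * (n + 1)) + 4 * m * n"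
    using spoke_i spoke_i' rim_i code_i offset_i by (simp add: offset_def)
  finally show ?thesis .
qed

theorem C3_supermagic: "H_supermagic (cycle_graph 3) (mWheel m n)"
proof -
  let ?c = "m * g 0 + 2 * m + 3 + 3 * (m * (n + 1)) + 4 * m * n"
  have "weight labeling G' = ?c" if "G' \<in> H_subgraphs (cycle_graph 3) (mWheel m n)" for G'
  proof -
    from that obtain j i where "(j, i) \<in> rim_vertices m n" "G' = wheel_triangle n (j, i)"
      unfolding mWheel_C3_subgraphs[OF four_le_n] by blast
    then show ?thesis by (simp only: weight_wheel_triangle)
  qed
  then have "H_magic_labeling (cycle_graph 3) (mWheel m n) labeling"
    unfolding H_magic_labeling_def using bij_labeling by blast
  moreover have "labeling ` Inl ` fst (mWheel m n) = {1 .. card (fst (mWheel m n))}"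
    using bij_betw_imp_surj_on[OF bij_vertex_label]
    by (simp add: image_image labeling_def card_mWheel_vertices)
  ultimately show ?thesis
    unfolding H_supermagic_def H_supermagic_labeling_def
    using mWheel_C3_covering[OF four_le_n] by blast
qed

end

definition base_0_mod_4 :: "nat \<Rightarrow> nat \<Rightarrow> nat" where
  "base_0_mod_4 h i = (if i = 0 then h else if i \<le> h then i - 1
     else if even i then i - 1 else i + 1)"

lemma base_0_mod_4_cases:
  assumes "1 \<le> i"
  shows "(i \<le> h \<and> base_0_mod_4 h i + 1 = i) \<or> (h < i \<and> even i \<and> base_0_mod_4 h i + 1 = i) \<or>
    (h < i \<and> odd i \<and> base_0_mod_4 h i = i + 1)"
  using assms by (simp add: base_0_mod_4_def)

lemma rim_sum_base_0_mod_4_cases: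
  assumes "even h" "2 \<le> h" "1 \<le> i" "i \<le> 2 * h"
  shows "(i < h \<and> rim_sum (2 * h) (base_0_mod_4 h) i + 1 = 2 * i) \<or>
    (h \<le> i \<and> i < 2 * h \<and> rim_sum (2 * h) (base_0_mod_4 h) i = 2 * i + 1) \<or>
    (i = 2 * h \<and> rim_sum (2 * h) (base_0_mod_4 h) i + 1 = 2 * h)"
proof (cases "i = 2 * h")
  case True
  with assms show ?thesis by (simp add: rim_sum_def rim_next_def base_0_mod_4_def)
next
  case False
  with assms have "rim_next (2 * h) i = Suc i" by (simp add: rim_next_eq)
  with assms False show ?thesis
    by (cases "i < h"; cases "i = h"; cases "even i") (simp_all add: rim_sum_def base_0_mod_4_def)
qed

text \<open>All rim sums are odd, so no two of them add up to \<open>2 n + 1\<close>.\<close>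
lemma admissible_base_0_mod_4:
  assumes "even h" "2 \<le> h"
  shows "admissible_base_labeling (2 * h) (base_0_mod_4 h)"
proof (rule admissible_base_labelingI)
  let ?g = "base_0_mod_4 h" and ?S = "rim_sum (2 * h) (base_0_mod_4 h)"
  show "?g ` {..2 * h} \<subseteq> {..2 * h}"
    by (auto simp: base_0_mod_4_def) presburger
  show "?g i \<noteq> ?g 0" if "i \<in> {1..2 * h}" for i
  proof -
    obtain x where "?g i = x" by simp
    with base_0_mod_4_cases[of i h] that assms(1) show ?thesis
      by (simp add: base_0_mod_4_def[of h 0]) (elim disjE conjE; presburger)
  qed
  show "inj_on ?g {1..2 * h}"
  proof (rule inj_onI)
    fix i k assume "i \<in> {1..2 * h}" "k \<in> {1..2 * h}" and "?g i = ?g k"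
    then obtain x where i: "1 \<le> i" and k: "1 \<le> k" and "?g i = x" "?g k = x" by simp
    with base_0_mod_4_cases[OF i, of h] base_0_mod_4_cases[OF k, of h] show "i = k"
      by (elim disjE conjE; (linarith | presburger))
  qed
  show "inj_on ?S {1..2 * h}"
  proof (rule inj_onI)
    fix i k assume "i \<in> {1..2 * h}" "k \<in> {1..2 * h}" and "?S i = ?S k"
    then obtain x where i: "1 \<le> i" "i \<le> 2 * h" and k: "1 \<le> k" "k \<le> 2 * h"
      and "?S i = x" "?S k = x" by simp
    with rim_sum_base_0_mod_4_cases[OF assms i] rim_sum_base_0_mod_4_cases[OF assms k]
    show "i = k" by (elim disjE conjE; linarith)
  qed
  have odd_rim_sum: "odd (?S i)" if "i \<in> {1..2 * h}" for i
  proof -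
    from that have i: "1 \<le> i" "i \<le> 2 * h" by simp_all
    obtain x where x: "?S i = x" by simp
    have "odd x"
      using rim_sum_base_0_mod_4_cases[OF assms i, unfolded x] by (elim disjE conjE; presburger)
    with x show ?thesis by simp
  qed
  fix i k assume "i \<in> {1..2 * h}" "k \<in> {1..2 * h}"
  then have "even (?S i + ?S k)" using odd_rim_sum by simp
  moreover have "odd (2 * (2 * h) + 1)" by simp
  ultimately show "?S i + ?S k \<noteq> 2 * (2 * h) + 1" by metis
qed

definition base_2_mod_4 :: "nat \<Rightarrow> nat \<Rightarrow> nat" where
  "base_2_mod_4 h i = (if i = 0 then h - 1 else if i < h then i - 1 else if i \<le> h + 1 then i
     else if odd i then i + 1 else i - 1)"

lemma base_2_mod_4_cases:
  assumes "1 \<le> i"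
  shows "(i < h \<and> base_2_mod_4 h i + 1 = i) \<or> ((i = h \<or> i = h + 1) \<and> base_2_mod_4 h i = i) \<or>
    (h + 1 < i \<and> odd i \<and> base_2_mod_4 h i = i + 1) \<or>
    (h + 1 < i \<and> even i \<and> base_2_mod_4 h i + 1 = i)"
  using assms by (simp add: base_2_mod_4_def) linarith

lemma rim_sum_base_2_mod_4_cases:
  assumes "odd h" "3 \<le> h" "1 \<le> i" "i \<le> 2 * h"
  shows "(i + 2 \<le> h \<and> rim_sum (2 * h) (base_2_mod_4 h) i + 1 = 2 * i) \<or>
    (i + 1 = h \<and> rim_sum (2 * h) (base_2_mod_4 h) i + 2 = 2 * h) \<or>
    (i = h \<and> rim_sum (2 * h) (base_2_mod_4 h) i = 2 * h + 1) \<or>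
    (i = h + 1 \<and> rim_sum (2 * h) (base_2_mod_4 h) i = 2 * h + 4) \<or>
    (h + 2 \<le> i \<and> i < 2 * h \<and> rim_sum (2 * h) (base_2_mod_4 h) i = 2 * i + 1) \<or>
    (i = 2 * h \<and> rim_sum (2 * h) (base_2_mod_4 h) i + 1 = 2 * h)"
proof (cases "i = 2 * h")
  case True
  with assms show ?thesis by (simp add: rim_sum_def rim_next_def base_2_mod_4_def)
next
  case False
  with assms have "rim_next (2 * h) i = Suc i" by (simp add: rim_next_eq)
  with assms False show ?thesis
    by (cases "i + 2 \<le> h"; cases "i + 1 = h"; cases "i = h"; cases "i = h + 1"; cases "even i")
      (simp_all add: rim_sum_def base_2_mod_4_def)
qed

text \<open>Here the rim sums are odd except for \<open>2 h - 2\<close> and \<open>2 h + 4\<close>, whose partners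
  \<open>2 h + 3\<close> and \<open>2 h - 3\<close> towards \<open>2 n + 1 = 4 h + 1\<close> do not occur.\<close>
lemma admissible_base_2_mod_4:
  assumes "odd h" "3 \<le> h"
  shows "admissible_base_labeling (2 * h) (base_2_mod_4 h)"
proof (rule admissible_base_labelingI)
  let ?g = "base_2_mod_4 h" and ?S = "rim_sum (2 * h) (base_2_mod_4 h)"
  show "?g ` {..2 * h} \<subseteq> {..2 * h}"
    using assms(1) by (auto simp: base_2_mod_4_def) presburger
  show "?g i \<noteq> ?g 0" if "i \<in> {1..2 * h}" for i
  proof -
    obtain x where "?g i = x" by simp
    with base_2_mod_4_cases[of i h] that assms(2) show ?thesis
      by (simp add: base_2_mod_4_def[of h 0]) (elim disjE conjE; linarith)
  qed
  show "inj_on ?g {1..2 * h}"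
  proof (rule inj_onI)
    fix i k assume "i \<in> {1..2 * h}" "k \<in> {1..2 * h}" and "?g i = ?g k"
    then obtain x where i: "1 \<le> i" and k: "1 \<le> k" and "?g i = x" "?g k = x" by simp
    with base_2_mod_4_cases[OF i, of h] base_2_mod_4_cases[OF k, of h] assms(1) show "i = k"
      by (elim disjE conjE; (linarith | presburger))
  qed
  show "inj_on ?S {1..2 * h}"
  proof (rule inj_onI)
    fix i k assume "i \<in> {1..2 * h}" "k \<in> {1..2 * h}" and "?S i = ?S k"
    then obtain x where i: "1 \<le> i" "i \<le> 2 * h" and k: "1 \<le> k" "k \<le> 2 * h"
      and "?S i = x" "?S k = x" by simp
    with rim_sum_base_2_mod_4_cases[OF assms i] rim_sum_base_2_mod_4_cases[OF assms k]
    show "i = k" by (elim disjE conjE; linarith)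
  qed
  have rim_sum_shape: "(odd x \<or> x + 2 = 2 * h \<or> x = 2 * h + 4) \<and> x \<noteq> 2 * h + 3 \<and> x + 3 \<noteq> 2 * h"
    if "i \<in> {1..2 * h}" "?S i = x" for i x
  proof -
    from that have i: "1 \<le> i" "i \<le> 2 * h" by simp_all
    with rim_sum_base_2_mod_4_cases[OF assms i, unfolded that(2)] show ?thesis
      by (elim disjE conjE; presburger)
  qed
  fix i k assume "i \<in> {1..2 * h}" "k \<in> {1..2 * h}"
  moreover obtain x y where "?S i = x" "?S k = y" by simp
  ultimately have "(odd x \<or> x + 2 = 2 * h \<or> x = 2 * h + 4) \<and> x \<noteq> 2 * h + 3 \<and> x + 3 \<noteq> 2 * h"
    and "(odd y \<or> y + 2 = 2 * h \<or> y = 2 * h + 4) \<and> y \<noteq> 2 * h + 3 \<and> y + 3 \<noteq> 2 * h"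
    using rim_sum_shape by blast+
  then have "x + y \<noteq> 2 * (2 * h) + 1" by (elim disjE conjE; presburger)
  with \<open>?S i = x\<close> \<open>?S k = y\<close> show "?S i + ?S k \<noteq> 2 * (2 * h) + 1" by simp
qed

lemma admissible_base_labeling_exists:
  assumes "even n" "4 \<le> n"
  obtains g where "admissible_base_labeling n g"
proof -
  from assms(1) obtain h where n: "n = 2 * h" by (elim evenE)
  show thesis
  proof (cases "even h")
    case True
    moreover from assms(2) n have "2 \<le> h" by simp
    ultimately have "admissible_base_labeling (2 * h) (base_0_mod_4 h)" by (rule admissible_base_0_mod_4)
    with n that show thesis by blast
  next
    case False
    moreover from assms(2) n False have "3 \<le> h" by presburger
    ultimately have "admissible_base_labeling (2 * h) (base_2_mod_4 h)" by (rule admissible_base_2_mod_4)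
    with n that show thesis by blast
  qed
qed

theorem theorem6:
  fixes n m :: nat
  assumes "even n" and "n \<ge> 4" and "m \<ge> 2"
  shows "H_supermagic (cycle_graph 3) (mWheel m n)"
proof -
  \<comment> \<open>The construction works for every \<open>m\<close>.\<close>
  from assms(1,2) obtain g where "admissible_base_labeling n g"
    by (rule admissible_base_labeling_exists)
  with assms(1,2) interpret mWheel_labeling m n g by unfold_locales
  show ?thesis by (rule C3_supermagic)
qed

end
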